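(* Let $L = L_p + \varepsilon L_d \in \mathbb{DH}[t]$ with $L_p, L_d$ vectorial and satisfying the Plücker condition $L_p\overline{L_d} + L_d\overline{L_p} = 0$, let $h \in \mathbb{R}[t]$, and let $P, D \in \mathbb{H}[t]$ with $P \neq 0$ satisfy $$P\mathbf{k}\overline{P} = hL_p, \qquad -P\mathbf{k}\overline{D} - D\mathbf{k}\overline{P} = hL_d .$$ Then $P\overline{D} + D\overline{P} = 0$.
   Context: $\mathbb{H}$ denotes the real quaternions with units $\mathbf{i},\mathbf{j},\mathbf{k}$ and conjugation $\overline{p_0 + p_1\mathbf{i} + p_2\mathbf{j} + p_3\mathbf{k}} = p_0 - p_1\mathbf{i} - p_2\mathbf{j} - p_3\mathbf{k}$; $\mathbb{DH} = \mathbb{H} + \varepsilon\mathbb{H}$ with $\varepsilon^2=0$, $\varepsilon$ central. $\mathbb{H}[t]$, $\mathbb{DH}[t]$ are polynomial rings in a real indeterminate $t$ commuting with the coefficients; conjugation acts coefficientwise. A quaternion polynomial is vectorial if its scalar part is zero. *)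

theory Defs
  imports "HOL-Computational_Algebra.Polynomial"
begin

text \<open>Quaternion polynomials H[t], represented as H \<otimes> R[t]: a quaternion polynomial
  p0 + p1 i + p2 j + p3 k with real polynomial components p0,...,p3 in R[t].
  Since t is real and commutes with the coefficients, this is exactly H[t].\<close>

datatype qpoly = QP (q0: "real poly") (q1: "real poly") (q2: "real poly") (q3: "real poly")

definition qp_zero :: qpoly where "qp_zero = QP 0 0 0 0"

definition qp_add :: "qpoly \<Rightarrow> qpoly \<Rightarrow> qpoly" where
  "qp_add p q = QP (q0 p + q0 q) (q1 p + q1 q) (q2 p + q2 q) (q3 p + q3 q)"

definition qp_neg :: "qpoly \<Rightarrow> qpoly" where
  "qp_neg p = QP (- q0 p) (- q1 p) (- q2 p) (- q3 p)"

text \<open>Hamilton product (i^2 = j^2 = k^2 = ijk = -1), coefficients in R[t].\<close>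
definition qp_mult :: "qpoly \<Rightarrow> qpoly \<Rightarrow> qpoly" where
  "qp_mult p q = QP
     (q0 p * q0 q - q1 p * q1 q - q2 p * q2 q - q3 p * q3 q)
     (q0 p * q1 q + q1 p * q0 q + q2 p * q3 q - q3 p * q2 q)
     (q0 p * q2 q - q1 p * q3 q + q2 p * q0 q + q3 p * q1 q)
     (q0 p * q3 q + q1 p * q2 q - q2 p * q1 q + q3 p * q0 q)"

definition qp_cnj :: "qpoly \<Rightarrow> qpoly" where
  "qp_cnj p = QP (q0 p) (- q1 p) (- q2 p) (- q3 p)"

definition qp_of_real_poly :: "real poly \<Rightarrow> qpoly" where
  "qp_of_real_poly h = QP h 0 0 0"

definition qp_k :: qpoly where "qp_k = QP 0 0 0 1"

definition qp_vectorial :: "qpoly \<Rightarrow> bool" where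
  "qp_vectorial p \<longleftrightarrow> q0 p = 0"

end

theory Submission
  imports Defs
begin

text \<open>Write \<open>\<langle>p, q\<rangle>\<close> for the Euclidean inner product of the coefficient vectors, so that
  \<open>p q\<^sup>* + q p\<^sup>* = 2\<langle>p, q\<rangle>\<close>. The Pluecker condition says \<open>\<langle>L\<^sub>p, L\<^sub>d\<rangle> = 0\<close>, hence
  \<open>\<langle>h L\<^sub>p, h L\<^sub>d\<rangle> = h\<^sup>2 \<langle>L\<^sub>p, L\<^sub>d\<rangle> = 0\<close>. Since the norm is multiplicative,
  \<open>\<langle>P k P\<^sup>*, P k D\<^sup>* + D k P\<^sup>*\<rangle> = 2 |P|\<^sup>2 \<langle>P, D\<rangle>\<close>, so the two hypotheses give
  \<open>|P|\<^sup>2 \<langle>P, D\<rangle> = 0\<close>. As \<open>|P|\<^sup>2\<close> is a nonzero polynomial and \<open>\<real>[t]\<close> is a domain,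
  \<open>\<langle>P, D\<rangle> = 0\<close>, i.e. \<open>P D\<^sup>* + D P\<^sup>* = 0\<close>.\<close>

definition qp_dot :: "qpoly \<Rightarrow> qpoly \<Rightarrow> real poly" where
  "qp_dot p q = q0 p * q0 q + q1 p * q1 q + q2 p * q2 q + q3 p * q3 q"

definition qp_norm2 :: "qpoly \<Rightarrow> real poly" where
  "qp_norm2 p = qp_dot p p"

lemma qp_mult_assoc: "qp_mult (qp_mult p q) r = qp_mult p (qp_mult q r)"
  by (simp add: qp_mult_def algebra_simps)

lemma qp_of_real_poly_eq_zero_iff: "qp_of_real_poly h = qp_zero \<longleftrightarrow> h = 0"
  by (simp add: qp_of_real_poly_def qp_zero_def)

lemma qp_add_mult_cnj: "qp_add (qp_mult p (qp_cnj q)) (qp_mult q (qp_cnj p)) = qp_of_real_poly (2 * qp_dot p q)"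
  by (simp add: qp_add_def qp_mult_def qp_cnj_def qp_of_real_poly_def qp_dot_def algebra_simps)

lemma qp_dot_add_right: "qp_dot p (qp_add q r) = qp_dot p q + qp_dot p r"
  by (simp add: qp_dot_def qp_add_def algebra_simps)

lemma qp_dot_neg_right: "qp_dot p (qp_neg q) = - qp_dot p q"
  by (simp add: qp_dot_def qp_neg_def algebra_simps)

lemma qp_dot_cnj_cnj: "qp_dot (qp_cnj p) (qp_cnj q) = qp_dot p q"
  by (simp add: qp_dot_def qp_cnj_def)

lemma qp_norm2_cnj: "qp_norm2 (qp_cnj p) = qp_norm2 p"
  by (simp add: qp_norm2_def qp_dot_cnj_cnj)

lemma qp_dot_mult_left: "qp_dot (qp_mult a p) (qp_mult a q) = qp_norm2 a * qp_dot p q"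
  by (simp add: qp_norm2_def qp_dot_def qp_mult_def) algebra

lemma qp_dot_mult_right: "qp_dot (qp_mult p a) (qp_mult q a) = qp_dot p q * qp_norm2 a"
  by (simp add: qp_norm2_def qp_dot_def qp_mult_def) algebra

lemma sum_of_squares_eq_zero_poly:
  fixes a b c d :: "real poly"
  assumes "a * a + b * b + c * c + d * d = 0"
  shows "a = 0"
proof -
  have "poly a x = 0" for x
  proof -
    have "poly a x * poly a x + poly b x * poly b x + poly c x * poly c x + poly d x * poly d x = 0"
      using arg_cong[OF assms, of "\<lambda>p. poly p x"] by simp
    then show ?thesis
      by (smt (verit) zero_le_square mult_eq_0_iff)
  qed
  then show ?thesis
    using poly_all_0_iff_0 by blast
qed

lemma qp_norm2_eq_zero_iff: "qp_norm2 p = 0 \<longleftrightarrow> p = qp_zero"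
proof
  assume norm: "qp_norm2 p = 0"
  obtain p0 p1 p2 p3 where p: "p = QP p0 p1 p2 p3"
    by (cases p)
  have "p0 * p0 + p1 * p1 + p2 * p2 + p3 * p3 = 0"
    using norm by (simp add: qp_norm2_def qp_dot_def p)
  then have "p0 = 0" "p1 = 0" "p2 = 0" "p3 = 0"
    using sum_of_squares_eq_zero_poly[of p0 p1 p2 p3] sum_of_squares_eq_zero_poly[of p1 p0 p2 p3]
      sum_of_squares_eq_zero_poly[of p2 p0 p1 p3] sum_of_squares_eq_zero_poly[of p3 p0 p1 p2]
    by (simp_all add: algebra_simps)
  then show "p = qp_zero"
    by (simp add: p qp_zero_def)
qed (simp add: qp_norm2_def qp_dot_def qp_zero_def)

lemma qp_dot_sandwich:
  "qp_dot (qp_mult (qp_mult p u) (qp_cnj p))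
          (qp_add (qp_mult (qp_mult p u) (qp_cnj q)) (qp_mult (qp_mult q u) (qp_cnj p)))
   = 2 * qp_norm2 p * qp_norm2 u * qp_dot p q"
proof -
  have "qp_dot (qp_mult (qp_mult p u) (qp_cnj p)) (qp_mult (qp_mult p u) (qp_cnj q))
        = qp_norm2 p * qp_norm2 u * qp_dot p q"
    by (simp add: qp_mult_assoc qp_dot_mult_left qp_dot_cnj_cnj)
  moreover have "qp_dot (qp_mult (qp_mult p u) (qp_cnj p)) (qp_mult (qp_mult q u) (qp_cnj p))
        = qp_norm2 p * qp_norm2 u * qp_dot p q"
    by (simp add: qp_dot_mult_right qp_norm2_cnj)
  ultimately show ?thesis
    by (simp add: qp_dot_add_right)
qed

theorem lemma2:
  fixes Lp Ld P D :: qpoly and h :: "real poly"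
  assumes "qp_vectorial Lp" and "qp_vectorial Ld"
    and "qp_add (qp_mult Lp (qp_cnj Ld)) (qp_mult Ld (qp_cnj Lp)) = qp_zero"
    and "P \<noteq> qp_zero"
    and "qp_mult (qp_mult P qp_k) (qp_cnj P) = qp_mult (qp_of_real_poly h) Lp"
    and "qp_add (qp_neg (qp_mult (qp_mult P qp_k) (qp_cnj D)))
                (qp_neg (qp_mult (qp_mult D qp_k) (qp_cnj P)))
         = qp_mult (qp_of_real_poly h) Ld"
  shows "qp_add (qp_mult P (qp_cnj D)) (qp_mult D (qp_cnj P)) = qp_zero"
proof -
  have "qp_dot Lp Ld = 0"
    using assms(3) by (simp add: qp_add_mult_cnj qp_of_real_poly_eq_zero_iff)
  then have "qp_dot (qp_mult (qp_of_real_poly h) Lp) (qp_mult (qp_of_real_poly h) Ld) = 0"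
    by (simp add: qp_dot_mult_left)
  then have "qp_dot (qp_mult (qp_mult P qp_k) (qp_cnj P))
               (qp_add (qp_mult (qp_mult P qp_k) (qp_cnj D)) (qp_mult (qp_mult D qp_k) (qp_cnj P))) = 0"
    unfolding assms(5) assms(6)[symmetric] by (simp add: qp_dot_add_right qp_dot_neg_right)
  moreover have "qp_norm2 qp_k = 1"
    by (simp add: qp_norm2_def qp_dot_def qp_k_def)
  ultimately have "qp_norm2 P * qp_dot P D = 0"
    by (simp add: qp_dot_sandwich)
  moreover have "qp_norm2 P \<noteq> 0"
    using assms(4) by (simp add: qp_norm2_eq_zero_iff)
  ultimately have "qp_dot P D = 0"
    by simp
  then show ?thesis
    by (simp add: qp_add_mult_cnj qp_of_real_poly_eq_zero_iff)
qed

end
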